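(* Let $A \subseteq \mathbb{R}^d$ be locally finite, let $0 \le p \le d$, and let $\gamma$ be a $p$-cell of the Delaunay mosaic of $A$ with dual $(d-p)$-dimensional Voronoi cell $\gamma^*$. Let $z_0$ be the intersection point of the affine hulls $\mathrm{aff}(\gamma)$ and $\mathrm{aff}(\gamma^* )$, and let $R_0$ be the maximum distance between a point of $\gamma$ and a point of $\gamma^*$. Then the projection of the $p$-tile $J(\gamma,\gamma^* )$ to $\mathbb{R}^d$ (i.e. the set $\{x : (x,L) \in J(\gamma,\gamma^* ) \text{ for some } L\}$) is contained in the closed ball with center $z_0$ and radius $R_0$.
   Context: $\mathrm{Gr}(p,d)$ is the Grassmannian of linear $p$-planes in $\mathbb{R}^d$. The $p$-tile is $J(\gamma,\gamma^* ) = \{(x,L) \in \mathbb{R}^d \times \mathrm{Gr}(p,d) : x \in \text{the orthogonal projection of } \gamma \text{ onto } L+x, \text{ and } (L+x)\cap\gamma^* \neq \emptyset\}$. *)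

theory Defs
  imports "HOL-Analysis.Analysis"
begin

definition locally_finite_pts :: "'a::euclidean_space set \<Rightarrow> bool" where
  "locally_finite_pts A \<longleftrightarrow> (\<forall>S. bounded S \<longrightarrow> finite (A \<inter> S))"

definition voronoi_cell :: "'a::euclidean_space set \<Rightarrow> 'a set \<Rightarrow> 'a set" where
  "voronoi_cell A Q = {x. \<forall>a\<in>Q. \<forall>b\<in>A. dist x a \<le> dist x b}"

text \<open>The Delaunay cell is then convex hull Q and its dual Voronoi cell is
  voronoi_cell A Q.\<close>
definition delaunay_generators :: "'a::euclidean_space set \<Rightarrow> 'a set \<Rightarrow> bool" where
  "delaunay_generators A Q \<longleftrightarrow> Q \<subseteq> A \<and> Q \<noteq> {} \<and> voronoi_cell A Q \<noteq> {} \<and>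
     Q = {a\<in>A. voronoi_cell A Q \<subseteq> voronoi_cell A {a}}"

definition grassmannian :: "nat \<Rightarrow> 'a::euclidean_space set set" where
  "grassmannian p = {L. subspace L \<and> dim L = p}"

definition p_tile :: "'a::euclidean_space set \<Rightarrow> 'a set \<Rightarrow> nat \<Rightarrow> ('a \<times> 'a set) set" where
  "p_tile \<gamma> \<gamma>' p = {(x, L). L \<in> grassmannian p \<and>
      x \<in> closest_point ((\<lambda>v. x + v) ` L) ` \<gamma> \<and>
      ((\<lambda>v. x + v) ` L) \<inter> \<gamma>' \<noteq> {}}"

end

theory Submission
  imports Defs
begin

text \<open>A point x of the projected tile is the foot of the perpendicular from some u in gamma onto
  an affine p-plane through some v in gamma*, so x sees the segment [u, v] at an angle of at least
  90 degrees, i.e. it lies in the Thales ball with diameter [u, v].  Every point of the Voronoi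
  cell is equidistant from the generators, which makes aff(gamma) and aff(gamma*) orthogonal; hence
  z0 sees [u, v] at a right angle and lies in the same ball.  Two points of a ball of diameter
  dist u v are at most dist u v apart.\<close>

lemma inner_diff_eq_midpoint_dist:
  fixes u v x :: "'a::real_inner"
  shows "inner (u - x) (v - x) = (dist x (midpoint u v))\<^sup>2 - (dist u v / 2)\<^sup>2"
proof -
  define a b where "a = u - x" and "b = v - x"
  have "a + b = 2 *\<^sub>R (midpoint u v - x)"
    using midpoint_plus_self[of u v] by (simp add: a_def b_def scaleR_2 algebra_simps)
  then have "2 * dist x (midpoint u v) = norm (a + b)"
    by (simp add: dist_norm norm_minus_commute)
  then have "(2 * dist x (midpoint u v))\<^sup>2 = inner (a + b) (a + b)"
    by (simp only: power2_norm_eq_inner)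
  moreover have "(dist u v)\<^sup>2 = inner (a - b) (a - b)"
    by (simp add: a_def b_def dist_norm power2_norm_eq_inner)
  moreover have "inner (a + b) (a + b) - inner (a - b) (a - b) = 4 * inner a b"
    by (simp add: inner_add_left inner_add_right inner_diff_left inner_diff_right inner_commute)
  ultimately have "4 * inner a b = 4 * ((dist x (midpoint u v))\<^sup>2 - (dist u v / 2)\<^sup>2)"
    by (simp add: power_mult_distrib power_divide algebra_simps)
  then show ?thesis
    by (simp add: a_def b_def)
qed

lemma dist_le_if_inner_diff_nonpos:
  fixes u v x z :: "'a::real_inner"
  assumes "inner (u - x) (v - x) \<le> 0" and "inner (u - z) (v - z) \<le> 0"
  shows "dist z x \<le> dist u v"
proof -
  have ball: "dist y (midpoint u v) \<le> dist u v / 2" if "inner (u - y) (v - y) \<le> 0" for y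
  proof (rule power2_le_imp_le)
    show "(dist y (midpoint u v))\<^sup>2 \<le> (dist u v / 2)\<^sup>2"
      using that by (simp add: inner_diff_eq_midpoint_dist)
  qed simp
  have "dist z x \<le> dist z (midpoint u v) + dist x (midpoint u v)"
    by (rule dist_triangle2)
  with ball[OF assms(1)] ball[OF assms(2)] show ?thesis
    by linarith
qed

lemma inner_diff_eq_0_if_equidistant:
  fixes q q' w w' :: "'a::real_inner"
  assumes "dist w q = dist w q'" and "dist w' q = dist w' q'"
  shows "inner (q - q') (w - w') = 0"
proof -
  have "inner (w - q) (w - q) = inner (w - q') (w - q')"
       "inner (w' - q) (w' - q) = inner (w' - q') (w' - q')"
    using assms by (simp_all add: dist_norm dot_square_norm)
  then have "inner w w - 2 * inner w q + inner q q = inner w w - 2 * inner w q' + inner q' q'"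
       "inner w' w' - 2 * inner w' q + inner q q = inner w' w' - 2 * inner w' q' + inner q' q'"
    by (simp_all add: inner_diff_left inner_diff_right inner_commute)
  moreover have "inner (q - q') (w - w') = inner w q - inner w' q - inner w q' + inner w' q'"
    by (simp add: inner_diff_left inner_diff_right inner_commute)
  ultimately show ?thesis
    by linarith
qed

lemma inner_eq_on_affine_hull:
  fixes a :: "'a::real_inner"
  assumes "\<And>q q'. q \<in> Q \<Longrightarrow> q' \<in> Q \<Longrightarrow> inner a q = inner a q'"
    and "u \<in> affine hull Q" and "u' \<in> affine hull Q"
  shows "inner a u = inner a u'"
proof -
  obtain q0 where q0: "q0 \<in> Q"
    using assms(2) affine_hull_eq_empty[of Q] by blast
  have "affine hull Q \<subseteq> {y. inner a y = inner a q0}"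
    using assms(1)[OF _ q0] by (intro hull_minimal affine_hyperplane) auto
  from subsetD[OF this assms(2)] subsetD[OF this assms(3)] show ?thesis
    by simp
qed

lemma inner_diff_eq_0_on_affine_hulls:
  fixes Q V :: "'a::real_inner set"
  assumes "\<And>q q' v v'. \<lbrakk>q \<in> Q; q' \<in> Q; v \<in> V; v' \<in> V\<rbrakk> \<Longrightarrow> inner (q - q') (v - v') = 0"
    and "u \<in> affine hull Q" "u' \<in> affine hull Q" "w \<in> affine hull V" "w' \<in> affine hull V"
  shows "inner (u - u') (w - w') = 0"
proof -
  have Q_side: "inner (v - v') u = inner (v - v') u'" if "v \<in> V" "v' \<in> V" for v v'
  proof (rule inner_eq_on_affine_hull[OF _ assms(2,3)])
    fix q q'
    assume "q \<in> Q" "q' \<in> Q"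
    then have "inner (v - v') (q - q') = 0"
      using assms(1) that by (simp add: inner_commute)
    then show "inner (v - v') q = inner (v - v') q'"
      by (simp add: inner_diff_right)
  qed
  have "inner (u - u') v = inner (u - u') v'" if "v \<in> V" "v' \<in> V" for v v'
  proof -
    have "inner (u - u') (v - v') = inner (v - v') u - inner (v - v') u'"
      by (metis inner_commute inner_diff_right)
    then have "inner (u - u') (v - v') = 0"
      using Q_side[OF that] by simp
    then show ?thesis
      by (simp add: inner_diff_right)
  qed
  then have "inner (u - u') w = inner (u - u') w'"
    using assms(4,5) by (rule inner_eq_on_affine_hull)
  then show ?thesis
    by (simp add: inner_diff_right)
qed

lemma voronoi_cell_equidistant:
  assumes "Q \<subseteq> A" and "w \<in> voronoi_cell A Q" and "q \<in> Q" and "q' \<in> Q"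
  shows "dist w q = dist w q'"
proof -
  have "dist w q \<le> dist w q'" and "dist w q' \<le> dist w q"
    using assms unfolding voronoi_cell_def by blast+
  then show ?thesis
    by (rule order.antisym)
qed

lemma affine_hulls_delaunay_voronoi_orthogonal:
  assumes "Q \<subseteq> A"
    and "u \<in> affine hull Q" "u' \<in> affine hull Q"
    and "w \<in> affine hull (voronoi_cell A Q)" "w' \<in> affine hull (voronoi_cell A Q)"
  shows "inner (u - u') (w - w') = 0"
  using inner_diff_eq_0_on_affine_hulls[OF inner_diff_eq_0_if_equidistant assms(2-5)]
    voronoi_cell_equidistant[OF assms(1)] by blast

lemma fst_p_tileE:
  assumes "x \<in> fst ` p_tile \<gamma> \<gamma>' p"
  obtains u v where "u \<in> \<gamma>" and "v \<in> \<gamma>'" and "inner (u - x) (v - x) \<le> 0"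
proof -
  obtain L where "(x, L) \<in> p_tile \<gamma> \<gamma>' p"
    using assms by force
  then have L: "subspace L" and "x \<in> closest_point ((+) x ` L) ` \<gamma>"
    and "(+) x ` L \<inter> \<gamma>' \<noteq> {}"
    by (auto simp: p_tile_def grassmannian_def)
  then obtain u v where u: "u \<in> \<gamma>" and x: "x = closest_point ((+) x ` L) u"
    and v: "v \<in> (+) x ` L" "v \<in> \<gamma>'"
    by blast
  have "convex ((+) x ` L)" and "closed ((+) x ` L)"
    using subspace_imp_convex[OF L] closed_subspace[OF L] by (auto simp: closed_translation)
  then have "inner (u - x) (v - x) \<le> 0"
    using closest_point_dot[of "(+) x ` L" v u] v(1) x by simp
  with u v(2) show ?thesis
    by (rule that)
qed

theorem lemma3p3:
  fixes A Q :: "'a::euclidean_space set" and p :: nat and z0 :: 'a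
  assumes "locally_finite_pts A"
    and "p \<le> DIM('a)"
    and "delaunay_generators A Q"
    and "aff_dim (convex hull Q) = int p"
    and "aff_dim (voronoi_cell A Q) = int (DIM('a) - p)"
    and "z0 \<in> affine hull (convex hull Q) \<inter> affine hull (voronoi_cell A Q)"
  shows "\<forall>x \<in> fst ` p_tile (convex hull Q) (voronoi_cell A Q) p.
           ereal (dist z0 x) \<le> (SUP (u, v) \<in> convex hull Q \<times> voronoi_cell A Q. ereal (dist u v))"
proof
  fix x
  assume "x \<in> fst ` p_tile (convex hull Q) (voronoi_cell A Q) p"
  then obtain u v where u: "u \<in> convex hull Q" and v: "v \<in> voronoi_cell A Q"
    and x_obtuse: "inner (u - x) (v - x) \<le> 0"
    by (rule fst_p_tileE)
  have "Q \<subseteq> A"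
    using assms(3) by (simp add: delaunay_generators_def)
  moreover have "u \<in> affine hull Q" and "z0 \<in> affine hull Q"
    using hull_inc[OF u, of affine] assms(6) by simp_all
  moreover have "v \<in> affine hull (voronoi_cell A Q)" and "z0 \<in> affine hull (voronoi_cell A Q)"
    using hull_inc[OF v, of affine] assms(6) by simp_all
  ultimately have "inner (u - z0) (v - z0) = 0"
    by (rule affine_hulls_delaunay_voronoi_orthogonal)
  then have dist_bound: "dist z0 x \<le> dist u v"
    by (intro dist_le_if_inner_diff_nonpos[OF x_obtuse]) simp
  txt \<open>The index set of the supremum parses as convex hull (Q \<times> voronoi_cell A Q).\<close>
  have "(u, v) \<in> convex hull (Q \<times> voronoi_cell A Q)"
    using u hull_inc[OF v, of convex] by (simp add: convex_hull_Times)
  then show "ereal (dist z0 x) \<le> (SUP (u, v) \<in> convex hull Q \<times> voronoi_cell A Q. ereal (dist u v))"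
    by (rule SUP_upper2) (simp add: dist_bound)
qed

end
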